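(* For every $t\ge1$, $$\mathbb E_0\big[\phi_t(\overline{\mathcal X})\big]\ge\mathbb E\big[\phi_t(\overline{\mathcal Z})\big],$$ where $\overline{\mathcal X}=(\overline{\mathcal X}(s^t))_{s^t\in\mathcal S^t}$ and $\overline{\mathcal Z}=(\overline{\mathcal Z}(s^t))_{s^t\in\mathcal S^t}$.
   Context: $V=\{1,\dots,N\}$; $P$ row-stochastic irreducible aperiodic with stationary distribution $\pi>0$; $\beta\in\mathbb R^N$. $P(s^t)=\pi_{s_1}\prod_{k<t}P_{s_ks_{k+1}}$, $\mathcal S^t=\{s^t\in V^t:P(s^t)>0\}$, $C_t=|\mathcal S^t|$, $\beta(s^t)^2=\sum_{k=1}^t\beta_{s_k}^2$. For $x=(x_{s^t})_{s^t\in\mathcal S^t}\in\mathbb R^{C_t}$, $$\phi_t(x)=-\frac1t\log\Big(\sum_{s^t\in\mathcal S^t}P(s^t)e^{-\beta(s^t)^2/2+x_{s^t}}\Big).$$ Under $\mathbb P_0$ the $X_{i,k}$ ($i\in V$, $k\ge1$) are i.i.d. $\mathcal N(0,1)$, and $\overline{\mathcal X}(s^t)=\sum_{k=1}^t\beta_{s_k}X_{s_k,k}$. On a probability space $(\Omega,\mathcal F,\mathbb P)$ (expectation $\mathbb E$), for each $s^t\in\mathcal S^t$ let $Z_{s^t}=(Z_{s^t,1},\dots,Z_{s^t,t})$ have i.i.d. $\mathcal N(0,1)$ entries, the vectors for distinct $s^t$ being independent, and $\overline{\mathcal Z}(s^t)=\sum_{k=1}^t\beta_{s_k}Z_{s^t,k}$.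 *)

theory Defs
  imports "HOL-Probability.Probability"
begin

text \<open>Vertex set V = {1..N}. A path s^t is a list of length t with entries in V;
  the k-th entry (1-based in the paper) is s ! (k-1).\<close>

fun mpow :: "nat \<Rightarrow> (nat \<Rightarrow> nat \<Rightarrow> real) \<Rightarrow> nat \<Rightarrow> nat \<Rightarrow> nat \<Rightarrow> real" where
  "mpow N P 0 i j = (if i = j then 1 else 0)"
| "mpow N P (Suc n) i j = (\<Sum>l\<in>{1..N}. mpow N P n i l * P l j)"

definition row_stochastic :: "nat \<Rightarrow> (nat \<Rightarrow> nat \<Rightarrow> real) \<Rightarrow> bool" where
  "row_stochastic N P \<longleftrightarrow> (\<forall>i\<in>{1..N}. \<forall>j\<in>{1..N}. P i j \<ge> 0) \<and>
     (\<forall>i\<in>{1..N}. (\<Sum>j\<in>{1..N}. P i j) = 1)"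

definition irreducible_chain :: "nat \<Rightarrow> (nat \<Rightarrow> nat \<Rightarrow> real) \<Rightarrow> bool" where
  "irreducible_chain N P \<longleftrightarrow> (\<forall>i\<in>{1..N}. \<forall>j\<in>{1..N}. \<exists>n>0. mpow N P n i j > 0)"

definition aperiodic_chain :: "nat \<Rightarrow> (nat \<Rightarrow> nat \<Rightarrow> real) \<Rightarrow> bool" where
  "aperiodic_chain N P \<longleftrightarrow> (\<forall>i\<in>{1..N}. Gcd {n. n > 0 \<and> mpow N P n i i > 0} = 1)"

definition stationary_dist :: "nat \<Rightarrow> (nat \<Rightarrow> nat \<Rightarrow> real) \<Rightarrow> (nat \<Rightarrow> real) \<Rightarrow> bool" where
  "stationary_dist N P mu \<longleftrightarrow> (\<forall>i\<in>{1..N}. mu i \<ge> 0) \<and> (\<Sum>i\<in>{1..N}. mu i) = 1 \<and>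
     (\<forall>j\<in>{1..N}. (\<Sum>i\<in>{1..N}. mu i * P i j) = mu j)"

definition path_prob :: "(nat \<Rightarrow> nat \<Rightarrow> real) \<Rightarrow> (nat \<Rightarrow> real) \<Rightarrow> nat list \<Rightarrow> real" where
  "path_prob P mu s = mu (s ! 0) * (\<Prod>k<length s - 1. P (s ! k) (s ! (k+1)))"

definition Spaths :: "nat \<Rightarrow> (nat \<Rightarrow> nat \<Rightarrow> real) \<Rightarrow> (nat \<Rightarrow> real) \<Rightarrow> nat \<Rightarrow> nat list set" where
  "Spaths N P mu t = {s. length s = t \<and> set s \<subseteq> {1..N} \<and> path_prob P mu s > 0}"

definition beta_sq :: "(nat \<Rightarrow> real) \<Rightarrow> nat list \<Rightarrow> real" where
  "beta_sq beta s = (\<Sum>k<length s. (beta (s ! k))\<^sup>2)"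

definition phi :: "nat \<Rightarrow> (nat \<Rightarrow> nat \<Rightarrow> real) \<Rightarrow> (nat \<Rightarrow> real) \<Rightarrow> (nat \<Rightarrow> real) \<Rightarrow> nat
    \<Rightarrow> (nat list \<Rightarrow> real) \<Rightarrow> real" where
  "phi N P mu beta t x = - (1 / real t) *
     ln (\<Sum>s\<in>Spaths N P mu t. path_prob P mu s * exp (- beta_sq beta s / 2 + x s))"

definition Xbar :: "(nat \<Rightarrow> real) \<Rightarrow> (nat \<times> nat \<Rightarrow> real) \<Rightarrow> nat list \<Rightarrow> real" where
  "Xbar beta X s = (\<Sum>k<length s. beta (s ! k) * X (s ! k, k + 1))"

definition Zbar :: "(nat \<Rightarrow> real) \<Rightarrow> (nat list \<times> nat \<Rightarrow> real) \<Rightarrow> nat list \<Rightarrow> real" where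
  "Zbar beta Z s = (\<Sum>k<length s. beta (s ! k) * Z (s, k + 1))"

end

theory Submission
  imports Defs "HOL-Combinatorics.Transposition"
begin

text \<open>Both sides are expectations of -(1/t) ln of sums over paths of positive weights times
  exp (\<Sum>k \<beta>_{s_k} \<xi>_{s,k}). On the X-side all paths through vertex i at time k share the
  variable X_{i,k}, on the Z-side every path has private variables. We pass from the first to the
  second by giving private copies to the visitors of one site (vertex, time) after another. At
  each such step, concavity of ln bounds the new log-sum from below by a convex combination, with
  weights that involve neither the shared variable nor the new copies, of log-sums in which all
  visitors use the copy of a single visitor; exchanging that copy with the shared variable shows
  that each of these has the old expectation. So E ln increases along the way.\<close>

lemma integral_PiM_reindex:
  fixes F :: "('i \<Rightarrow> 'a) \<Rightarrow> real"
  assumes "prob_space \<nu>" "inj_on f I" "f \<in> I \<rightarrow> J"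
    and F: "F \<in> borel_measurable (PiM I (\<lambda>_. \<nu>))"
  shows "integrable (PiM J (\<lambda>_. \<nu>)) (\<lambda>\<omega>. F (\<lambda>i\<in>I. \<omega> (f i))) \<longleftrightarrow> integrable (PiM I (\<lambda>_. \<nu>)) F"
    and "(\<integral>\<omega>. F (\<lambda>i\<in>I. \<omega> (f i)) \<partial>PiM J (\<lambda>_. \<nu>)) = integral\<^sup>L (PiM I (\<lambda>_. \<nu>)) F"
proof -
  have law: "distr (PiM J (\<lambda>_. \<nu>)) (PiM I (\<lambda>_. \<nu>)) (\<lambda>\<omega>. \<lambda>i\<in>I. \<omega> (f i)) = PiM I (\<lambda>_. \<nu>)"
    using distr_PiM_reindex[of J "\<lambda>_. \<nu>" f I] assms by auto
  have meas: "(\<lambda>\<omega>. \<lambda>i\<in>I. \<omega> (f i)) \<in> measurable (PiM J (\<lambda>_. \<nu>)) (PiM I (\<lambda>_. \<nu>))"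
    using assms(3) by (intro measurable_restrict measurable_component_singleton) auto
  show "integrable (PiM J (\<lambda>_. \<nu>)) (\<lambda>\<omega>. F (\<lambda>i\<in>I. \<omega> (f i))) \<longleftrightarrow> integrable (PiM I (\<lambda>_. \<nu>)) F"
    using integrable_distr_eq[OF meas F] law by simp
  show "(\<integral>\<omega>. F (\<lambda>i\<in>I. \<omega> (f i)) \<partial>PiM J (\<lambda>_. \<nu>)) = integral\<^sup>L (PiM I (\<lambda>_. \<nu>)) F"
    using integral_distr[OF meas F] law by simp
qed

lemma (in prob_space) distr_PiM_of_iid:
  assumes "indep_vars (\<lambda>_. borel) Y I" "I \<noteq> {}"
    and "sets \<nu> = sets borel" "\<And>i. i \<in> I \<Longrightarrow> distr M borel (Y i) = \<nu>"
  shows "(\<lambda>\<omega>. \<lambda>i\<in>I. Y i \<omega>) \<in> measurable M (PiM I (\<lambda>_. \<nu>))"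
    and "distr M (PiM I (\<lambda>_. \<nu>)) (\<lambda>\<omega>. \<lambda>i\<in>I. Y i \<omega>) = PiM I (\<lambda>_. \<nu>)"
proof -
  have meas: "Y i \<in> borel_measurable M" if "i \<in> I" for i
    using assms(1) that unfolding indep_vars_def by blast
  show "(\<lambda>\<omega>. \<lambda>i\<in>I. Y i \<omega>) \<in> measurable M (PiM I (\<lambda>_. \<nu>))"
    using meas by (intro measurable_restrict) (simp add: measurable_cong_sets[OF refl assms(3)])
  have "distr M (PiM I (\<lambda>_. borel)) (\<lambda>\<omega>. \<lambda>i\<in>I. Y i \<omega>) = PiM I (\<lambda>i. distr M borel (Y i))"
    using indep_vars_iff_distr_eq_PiM'[OF assms(2), where M'="\<lambda>_. borel" and X=Y] assms(1) meas by auto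
  also have "\<dots> = PiM I (\<lambda>_. \<nu>)"
    by (rule PiM_cong) (auto simp: assms(4))
  finally show "distr M (PiM I (\<lambda>_. \<nu>)) (\<lambda>\<omega>. \<lambda>i\<in>I. Y i \<omega>) = PiM I (\<lambda>_. \<nu>)"
    by (metis (no_types) distr_cong sets_PiM_cong assms(3))
qed

lemma abs_ln_sum_exp_le:
  fixes W e :: "'a \<Rightarrow> real"
  assumes "finite S" "S \<noteq> {}" "\<And>s. s \<in> S \<Longrightarrow> W s > 0" "\<And>s. s \<in> S \<Longrightarrow> \<bar>e s\<bar> \<le> R"
  shows "\<bar>ln (\<Sum>s\<in>S. W s * exp (e s))\<bar> \<le> \<bar>ln (sum W S)\<bar> + R"
proof -
  have W_sum: "sum W S > 0"
    using assms by (intro sum_pos) auto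
  have pos: "(\<Sum>s\<in>S. W s * exp (e s)) > 0"
    using assms by (intro sum_pos) auto
  have "sum W S * exp (- R) \<le> (\<Sum>s\<in>S. W s * exp (e s))"
    unfolding sum_distrib_right using assms(3,4)
    by (intro sum_mono mult_left_mono) (auto simp: abs_le_iff minus_le_iff less_imp_le)
  then have "ln (sum W S * exp (- R)) \<le> ln (\<Sum>s\<in>S. W s * exp (e s))"
    using W_sum pos by (subst ln_le_cancel_iff) auto
  then have lower: "ln (sum W S) - R \<le> ln (\<Sum>s\<in>S. W s * exp (e s))"
    using W_sum by (simp add: ln_mult)
  have "(\<Sum>s\<in>S. W s * exp (e s)) \<le> sum W S * exp R"
    unfolding sum_distrib_right using assms(3,4)
    by (intro sum_mono mult_left_mono) (auto simp: abs_le_iff less_imp_le)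
  then have "ln (\<Sum>s\<in>S. W s * exp (e s)) \<le> ln (sum W S * exp R)"
    using W_sum pos by (subst ln_le_cancel_iff) auto
  then have upper: "ln (\<Sum>s\<in>S. W s * exp (e s)) \<le> ln (sum W S) + R"
    using W_sum by (simp add: ln_mult)
  show ?thesis
    using lower upper by linarith
qed

text \<open>Path s visits the site \<open>site s k\<close> at time k < t, and \<open>slot s k\<close> indexes its private
  noise variable at that time. For the theorem, sites are pairs (vertex, time) and slots pairs
  (path, time).\<close>

locale shared_noise =
  fixes S :: "'p set" and t :: nat and W :: "'p \<Rightarrow> real"
    and site :: "'p \<Rightarrow> nat \<Rightarrow> 'c" and slot :: "'p \<Rightarrow> nat \<Rightarrow> 'i"
    and a :: "'c \<Rightarrow> real" and \<nu> :: "real measure"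
  assumes finite_S: "finite S" and S_nonempty: "S \<noteq> {}"
    and W_pos: "\<And>s. s \<in> S \<Longrightarrow> W s > 0"
    and site_determines_time:
      "\<And>s s' k k'. s \<in> S \<Longrightarrow> s' \<in> S \<Longrightarrow> k < t \<Longrightarrow> k' < t \<Longrightarrow> site s k = site s' k' \<Longrightarrow> k = k'"
    and slot_inj:
      "\<And>s s' k k'. s \<in> S \<Longrightarrow> s' \<in> S \<Longrightarrow> k < t \<Longrightarrow> k' < t \<Longrightarrow> slot s k = slot s' k' \<Longrightarrow> s = s' \<and> k = k'"
    and prob_space_\<nu>: "prob_space \<nu>" and sets_\<nu>: "sets \<nu> = sets borel"
    and integrable_\<nu>: "integrable \<nu> (\<lambda>x. x)"
begin

definition sites :: "'c set" where
  "sites = {site s k |s k. s \<in> S \<and> k < t}"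

definition slots :: "'i set" where
  "slots = {slot s k |s k. s \<in> S \<and> k < t}"

abbreviation noise_space :: "('i \<Rightarrow> real) measure" where
  "noise_space \<equiv> PiM slots (\<lambda>_. \<nu>)"

definition anchor :: "'c \<Rightarrow> 'p \<times> nat" where
  "anchor c = (SOME (s, k). s \<in> S \<and> k < t \<and> site s k = c)"

definition anchor_slot :: "'c \<Rightarrow> 'i" where
  "anchor_slot c = case_prod slot (anchor c)"

text \<open>Path s reads its own noise at time k if its site there is in D, and otherwise the noise
  of the fixed anchor of that site, which it shares with every other path through the site.\<close>

definition noise :: "'c set \<Rightarrow> 'p \<Rightarrow> nat \<Rightarrow> 'i" where
  "noise D s k = (if site s k \<in> D then slot s k else anchor_slot (site s k))"

definition energy :: "'c set \<Rightarrow> 'p \<Rightarrow> ('i \<Rightarrow> real) \<Rightarrow> real" where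
  "energy D s \<omega> = (\<Sum>k<t. a (site s k) * \<omega> (noise D s k))"

definition partition_sum :: "'c set \<Rightarrow> ('i \<Rightarrow> real) \<Rightarrow> real" where
  "partition_sum D \<omega> = (\<Sum>s\<in>S. W s * exp (energy D s \<omega>))"

definition log_partition :: "'c set \<Rightarrow> ('i \<Rightarrow> real) \<Rightarrow> real" where
  "log_partition D \<omega> = ln (partition_sum D \<omega>)"

lemma anchor_site:
  assumes "s \<in> S" "k < t"
  shows "fst (anchor (site s k)) \<in> S" "snd (anchor (site s k)) = k"
    and "site (fst (anchor (site s k))) k = site s k"
proof -
  have "\<exists>p. case p of (s', k') \<Rightarrow> s' \<in> S \<and> k' < t \<and> site s' k' = site s k"
    using assms by auto
  from someI_ex[OF this] obtain s' k' where
    anchor: "anchor (site s k) = (s', k')" "s' \<in> S" "k' < t" "site s' k' = site s k"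
    unfolding anchor_def by (auto split: prod.splits)
  with site_determines_time assms have "k' = k" by metis
  with anchor show "fst (anchor (site s k)) \<in> S" "snd (anchor (site s k)) = k"
      "site (fst (anchor (site s k))) k = site s k"
    by auto
qed

lemma anchor_slot_site: "s \<in> S \<Longrightarrow> k < t \<Longrightarrow> anchor_slot (site s k) = slot (fst (anchor (site s k))) k"
  unfolding anchor_slot_def using anchor_site(2) by (metis case_prod_beta)

lemma anchor_slot_in_slots: "c \<in> sites \<Longrightarrow> anchor_slot c \<in> slots"
  unfolding sites_def slots_def using anchor_site anchor_slot_site by blast

lemma inj_on_anchor_slot: "inj_on anchor_slot sites"
proof
  fix c c' assume "c \<in> sites" "c' \<in> sites" and eq: "anchor_slot c = anchor_slot c'"
  then obtain s k s' k' where c: "c = site s k" "s \<in> S" "k < t" and c': "c' = site s' k'" "s' \<in> S" "k' < t"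
    unfolding sites_def by auto
  with eq have "fst (anchor c) = fst (anchor c') \<and> k = k'"
    using slot_inj anchor_site(1) anchor_slot_site by metis
  with c c' show "c = c'"
    using anchor_site(3) by metis
qed

lemma noise_in_slots: "s \<in> S \<Longrightarrow> k < t \<Longrightarrow> noise D s k \<in> slots"
  unfolding noise_def using anchor_slot_in_slots[of "site s k"] by (auto simp: slots_def sites_def)

lemma finite_sites: "finite sites"
proof -
  have "sites = (\<lambda>(s, k). site s k) ` (S \<times> {..<t})"
    unfolding sites_def by auto
  then show ?thesis
    using finite_S by simp
qed

lemma finite_slots: "finite slots"
proof -
  have "slots = (\<lambda>(s, k). slot s k) ` (S \<times> {..<t})"
    unfolding slots_def by auto
  then show ?thesis
    using finite_S by simp
qed

lemma measurable_PiM_component_borel [measurable]: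
  "(\<lambda>\<omega>. \<omega> i) \<in> borel_measurable (PiM I (\<lambda>_. \<nu>))"
proof (cases "i \<in> I")
  case True
  then show ?thesis
    using measurable_component_singleton[OF True, of "\<lambda>_. \<nu>"]
    by (simp add: measurable_cong_sets[OF refl sets_\<nu>])
next
  case False
  then have "undefined = \<omega> i" if "\<omega> \<in> space (PiM I (\<lambda>_. \<nu>))" for \<omega>
    using that by (auto simp: space_PiM PiE_def extensional_def)
  moreover have "(\<lambda>_. undefined) \<in> borel_measurable (PiM I (\<lambda>_. \<nu>))"
    by simp
  ultimately show ?thesis
    using measurable_cong[where f="\<lambda>_. undefined" and g="\<lambda>\<omega>. \<omega> i"
        and M="PiM I (\<lambda>_. \<nu>)" and M'=borel]
    by blast
qed

lemma integrable_PiM_component: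
  assumes "i \<in> I"
  shows "integrable (PiM I (\<lambda>_. \<nu>)) (\<lambda>\<omega>. \<omega> i)"
proof -
  have law: "distr (PiM I (\<lambda>_. \<nu>)) \<nu> (\<lambda>\<omega>. \<omega> i) = \<nu>"
    using assms prob_space_\<nu> by (intro distr_PiM_component)
  have "(\<lambda>\<omega>. \<omega> i) \<in> measurable (PiM I (\<lambda>_. \<nu>)) \<nu>"
    using assms by (rule measurable_component_singleton)
  from integrable_distr_eq[OF this, of "\<lambda>x. x"] show ?thesis
    using law integrable_\<nu> by (simp add: measurable_cong_sets[OF refl sets_\<nu>])
qed

lemma measurable_log_partition [measurable]: "log_partition D \<in> borel_measurable noise_space"
  unfolding log_partition_def partition_sum_def energy_def by measurable

lemma abs_log_partition_le:
  "\<bar>log_partition D \<omega>\<bar> \<le> \<bar>ln (sum W S)\<bar> + (\<Sum>s\<in>S. \<Sum>k<t. \<bar>a (site s k)\<bar>) * (\<Sum>i\<in>slots. \<bar>\<omega> i\<bar>)"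
proof -
  have "\<bar>energy D s \<omega>\<bar> \<le> (\<Sum>s\<in>S. \<Sum>k<t. \<bar>a (site s k)\<bar>) * (\<Sum>i\<in>slots. \<bar>\<omega> i\<bar>)"
    if "s \<in> S" for s
  proof -
    have "\<bar>energy D s \<omega>\<bar> \<le> (\<Sum>k<t. \<bar>a (site s k)\<bar> * \<bar>\<omega> (noise D s k)\<bar>)"
      unfolding energy_def by (rule order_trans[OF sum_abs]) (simp add: abs_mult)
    also have "\<dots> \<le> (\<Sum>k<t. \<bar>a (site s k)\<bar> * (\<Sum>i\<in>slots. \<bar>\<omega> i\<bar>))"
      using finite_slots noise_in_slots[OF that]
      by (intro sum_mono mult_left_mono member_le_sum[where f="\<lambda>i. \<bar>\<omega> i\<bar>"]) auto
    also have "\<dots> \<le> (\<Sum>s\<in>S. \<Sum>k<t. \<bar>a (site s k)\<bar>) * (\<Sum>i\<in>slots. \<bar>\<omega> i\<bar>)"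
      unfolding sum_distrib_right[symmetric] using that finite_S
      by (intro mult_right_mono member_le_sum[where f="\<lambda>s. \<Sum>k<t. \<bar>a (site s k)\<bar>"])
        (auto intro: sum_nonneg)
    finally show ?thesis .
  qed
  then show ?thesis
    unfolding log_partition_def partition_sum_def
    using finite_S S_nonempty W_pos by (intro abs_ln_sum_exp_le) auto
qed

lemma integrable_log_partition: "integrable noise_space (log_partition D)"
proof (rule Bochner_Integration.integrable_bound)
  interpret prob_space noise_space
    using prob_space_\<nu> by (intro prob_space_PiM)
  show "integrable noise_space
      (\<lambda>\<omega>. \<bar>ln (sum W S)\<bar> + (\<Sum>s\<in>S. \<Sum>k<t. \<bar>a (site s k)\<bar>) * (\<Sum>i\<in>slots. \<bar>\<omega> i\<bar>))"
    by (intro Bochner_Integration.integrable_add integrable_mult_right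
        Bochner_Integration.integrable_sum integrable_abs integrable_PiM_component) auto
  show "AE \<omega> in noise_space. norm (log_partition D \<omega>) \<le>
      norm (\<bar>ln (sum W S)\<bar> + (\<Sum>s\<in>S. \<Sum>k<t. \<bar>a (site s k)\<bar>) * (\<Sum>i\<in>slots. \<bar>\<omega> i\<bar>))"
    using order_trans[OF abs_log_partition_le abs_ge_self] by (intro AE_I2) simp
qed simp

end

locale site_split = shared_noise S t W site slot a \<nu>
  for S :: "'p set" and t W and site :: "'p \<Rightarrow> nat \<Rightarrow> 'c" and slot :: "'p \<Rightarrow> nat \<Rightarrow> 'i" and a \<nu> +
  fixes D :: "'c set" and s0 :: 'p and k0 :: nat
  assumes s0: "s0 \<in> S" and k0: "k0 < t" and split_site_notin: "site s0 k0 \<notin> D"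
begin

abbreviation split_site :: 'c where
  "split_site \<equiv> site s0 k0"

abbreviation shared_slot :: 'i where
  "shared_slot \<equiv> anchor_slot split_site"

definition visitors :: "'p set" where
  "visitors = {s \<in> S. site s k0 = split_site}"

definition outside_sum :: "('i \<Rightarrow> real) \<Rightarrow> real" where
  "outside_sum \<omega> = (\<Sum>s\<in>S - visitors. W s * exp (energy D s \<omega>))"

definition visitor_weight :: "'p \<Rightarrow> ('i \<Rightarrow> real) \<Rightarrow> real" where
  "visitor_weight s \<omega> = W s * exp (\<Sum>k\<in>{..<t} - {k0}. a (site s k) * \<omega> (noise D s k))"

definition visitor_total :: "('i \<Rightarrow> real) \<Rightarrow> real" where
  "visitor_total \<omega> = (\<Sum>s\<in>visitors. visitor_weight s \<omega>)"

definition visitor_share :: "'p \<Rightarrow> ('i \<Rightarrow> real) \<Rightarrow> real" where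
  "visitor_share s \<omega> = visitor_weight s \<omega> / visitor_total \<omega>"

definition split_term :: "'p \<Rightarrow> ('i \<Rightarrow> real) \<Rightarrow> real" where
  "split_term s \<omega> =
     visitor_share s \<omega> * ln (outside_sum \<omega> + visitor_total \<omega> * exp (a split_site * \<omega> (slot s k0)))"

lemma site_eq_split_site_iff:
  "s \<in> S \<Longrightarrow> k < t \<Longrightarrow> site s k = split_site \<longleftrightarrow> s \<in> visitors \<and> k = k0"
  unfolding visitors_def using site_determines_time s0 k0 by blast

lemma finite_visitors: "finite visitors"
  using finite_S unfolding visitors_def by simp

lemma s0_visitor: "s0 \<in> visitors"
  unfolding visitors_def using s0 by simp

lemma anchor_visitor: "fst (anchor split_site) \<in> visitors"
  unfolding visitors_def using anchor_site[OF s0 k0] by simp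

lemma noise_visitor:
  assumes "s \<in> visitors"
  shows "noise D s k0 = shared_slot" "noise (insert split_site D) s k0 = slot s k0"
  using assms split_site_notin unfolding noise_def visitors_def by auto

lemma noise_insert:
  "s \<in> S \<Longrightarrow> k < t \<Longrightarrow> \<not> (s \<in> visitors \<and> k = k0) \<Longrightarrow> noise (insert split_site D) s k = noise D s k"
  unfolding noise_def using site_eq_split_site_iff by auto

lemma energy_split:
  "energy D' s \<omega> = a (site s k0) * \<omega> (noise D' s k0) + (\<Sum>k\<in>{..<t} - {k0}. a (site s k) * \<omega> (noise D' s k))"
  unfolding energy_def using k0 by (subst sum.remove[of _ k0]) auto

lemma partition_sum_split:
  "partition_sum D' \<omega> = (\<Sum>s\<in>S - visitors. W s * exp (energy D' s \<omega>)) +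
     (\<Sum>s\<in>visitors. W s * exp (energy D' s \<omega>))"
  unfolding partition_sum_def using finite_S by (intro sum.subset_diff) (auto simp: visitors_def)

lemma partition_sum_before_split:
  "partition_sum D \<omega> = outside_sum \<omega> + visitor_total \<omega> * exp (a split_site * \<omega> shared_slot)"
proof -
  have "W s * exp (energy D s \<omega>) =
      visitor_weight s \<omega> * exp (a split_site * \<omega> shared_slot)" if "s \<in> visitors" for s
    using that unfolding energy_split visitor_weight_def
    by (simp add: noise_visitor exp_add visitors_def)
  then show ?thesis
    unfolding partition_sum_split outside_sum_def visitor_total_def sum_distrib_right by simp
qed

lemma partition_sum_after_split:
  "partition_sum (insert split_site D) \<omega> =
     outside_sum \<omega> + (\<Sum>s\<in>visitors. visitor_weight s \<omega> * exp (a split_site * \<omega> (slot s k0)))"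
proof -
  have outside: "energy (insert split_site D) s \<omega> = energy D s \<omega>" if "s \<in> S - visitors" for s
    unfolding energy_def using that noise_insert by (intro sum.cong) auto
  have "W s * exp (energy (insert split_site D) s \<omega>) =
      visitor_weight s \<omega> * exp (a split_site * \<omega> (slot s k0))" if s: "s \<in> visitors" for s
  proof -
    have "s \<in> S" using s by (simp add: visitors_def)
    then have "(\<Sum>k\<in>{..<t} - {k0}. a (site s k) * \<omega> (noise (insert split_site D) s k)) =
        (\<Sum>k\<in>{..<t} - {k0}. a (site s k) * \<omega> (noise D s k))"
      using noise_insert by (intro sum.cong) auto
    then show ?thesis
      using s unfolding energy_split visitor_weight_def
      by (simp add: noise_visitor exp_add visitors_def)
  qed
  then show ?thesis
    unfolding partition_sum_split outside_sum_def using outside by simp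
qed

lemma visitor_weight_pos: "s \<in> visitors \<Longrightarrow> visitor_weight s \<omega> > 0"
  unfolding visitor_weight_def visitors_def using W_pos by simp

lemma visitor_total_pos: "visitor_total \<omega> > 0"
  unfolding visitor_total_def using finite_visitors s0_visitor visitor_weight_pos by (intro sum_pos) auto

lemma outside_sum_nonneg: "outside_sum \<omega> \<ge> 0"
  unfolding outside_sum_def using W_pos by (intro sum_nonneg) (simp add: less_imp_le)

lemma sum_visitor_share: "(\<Sum>s\<in>visitors. visitor_share s \<omega>) = 1"
  unfolding visitor_share_def sum_divide_distrib[symmetric] visitor_total_def[symmetric]
  using visitor_total_pos[of \<omega>] by simp

lemma visitor_share_bounds: "s \<in> visitors \<Longrightarrow> 0 \<le> visitor_share s \<omega> \<and> visitor_share s \<omega> \<le> 1"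
  using visitor_weight_pos visitor_total_pos[of \<omega>]
    member_le_sum[of s visitors "\<lambda>s. visitor_weight s \<omega>"] finite_visitors
  unfolding visitor_share_def visitor_total_def by (auto simp: less_imp_le)

lemma sum_split_term_le: "(\<Sum>s\<in>visitors. split_term s \<omega>) \<le> log_partition (insert split_site D) \<omega>"
proof -
  let ?y = "\<lambda>s. outside_sum \<omega> + visitor_total \<omega> * exp (a split_site * \<omega> (slot s k0))"
  have "(\<Sum>s\<in>visitors. split_term s \<omega>) \<le> ln (\<Sum>s\<in>visitors. visitor_share s \<omega> *\<^sub>R ?y s)"
    unfolding split_term_def
    using finite_visitors s0_visitor sum_visitor_share visitor_share_bounds
      outside_sum_nonneg[of \<omega>] visitor_total_pos[of \<omega>]
    by (intro concave_on_sum[OF _ _ ln_concave]) (auto intro: add_nonneg_pos)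
  also have "(\<Sum>s\<in>visitors. visitor_share s \<omega> *\<^sub>R ?y s) = partition_sum (insert split_site D) \<omega>"
    using visitor_total_pos[of \<omega>] sum_visitor_share[of \<omega>]
    unfolding partition_sum_after_split visitor_share_def scaleR_conv_of_real of_real_def[symmetric]
    by (simp add: distrib_left sum.distrib sum_distrib_right[symmetric] sum_divide_distrib[symmetric])
  finally show ?thesis
    unfolding log_partition_def .
qed

lemma noise_ne_visitor_slot:
  assumes "s \<in> S" "k < t" "\<not> (s \<in> visitors \<and> k = k0)" "v \<in> visitors"
  shows "noise D s k \<noteq> slot v k0"
proof
  assume eq: "noise D s k = slot v k0"
  have v: "v \<in> S" "site v k0 = split_site"
    using assms(4) unfolding visitors_def by auto
  show False
  proof (cases "site s k \<in> D")
    case True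
    then have "s = v \<and> k = k0"
      using eq slot_inj[OF assms(1) v(1) assms(2) k0] unfolding noise_def by simp
    then show False
      using assms(3,4) by simp
  next
    case False
    then have "slot (fst (anchor (site s k))) k = slot v k0"
      using eq anchor_slot_site[OF assms(1,2)] unfolding noise_def by simp
    then have "fst (anchor (site s k)) = v \<and> k = k0"
      using slot_inj anchor_site(1)[OF assms(1,2)] v(1) assms(2) k0 by blast
    then have "site s k = split_site"
      using anchor_site(3)[OF assms(1,2)] v(2) by metis
    then show False
      using assms(1-3) site_eq_split_site_iff by blast
  qed
qed

definition swap_noise :: "'p \<Rightarrow> ('i \<Rightarrow> real) \<Rightarrow> 'i \<Rightarrow> real" where
  "swap_noise v \<omega> = (\<lambda>i\<in>slots. \<omega> (Transposition.transpose (slot v k0) shared_slot i))"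

lemma swap_noise_noise:
  assumes "v \<in> visitors" "s \<in> S" "k < t" "\<not> (s \<in> visitors \<and> k = k0)"
  shows "swap_noise v \<omega> (noise D s k) = \<omega> (noise D s k)"
proof -
  have "shared_slot = slot (fst (anchor split_site)) k0"
    using anchor_slot_site[OF s0 k0] .
  then show ?thesis
    unfolding swap_noise_def
    using noise_in_slots[OF assms(2,3)] noise_ne_visitor_slot[OF assms(2-4)] assms(1)
      noise_ne_visitor_slot[OF assms(2-4) anchor_visitor]
    by simp
qed

lemma swap_noise_invariants:
  assumes "v \<in> visitors"
  shows "outside_sum (swap_noise v \<omega>) = outside_sum \<omega>"
    and "visitor_total (swap_noise v \<omega>) = visitor_total \<omega>"
    and "visitor_share v (swap_noise v \<omega>) = visitor_share v \<omega>"
proof -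
  have energy: "energy D s (swap_noise v \<omega>) = energy D s \<omega>" if "s \<in> S - visitors" for s
    unfolding energy_def using that assms swap_noise_noise by (intro sum.cong) auto
  then show "outside_sum (swap_noise v \<omega>) = outside_sum \<omega>"
    unfolding outside_sum_def by simp
  have weight: "visitor_weight s (swap_noise v \<omega>) = visitor_weight s \<omega>" if "s \<in> visitors" for s
    using that assms swap_noise_noise unfolding visitor_weight_def
    by (intro arg_cong[where f="\<lambda>x. W s * exp x"] sum.cong) (auto simp: visitors_def)
  show total: "visitor_total (swap_noise v \<omega>) = visitor_total \<omega>"
    unfolding visitor_total_def using weight by simp
  show "visitor_share v (swap_noise v \<omega>) = visitor_share v \<omega>"
    unfolding visitor_share_def using weight[OF assms] total by simp
qed

lemma split_term_swap_noise:
  assumes "v \<in> visitors"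
  shows "split_term v (swap_noise v \<omega>) = visitor_share v \<omega> * log_partition D \<omega>"
proof -
  have "slot v k0 \<in> slots"
    using assms k0 unfolding visitors_def slots_def by auto
  then have "swap_noise v \<omega> (slot v k0) = \<omega> shared_slot"
    unfolding swap_noise_def by simp
  then show ?thesis
    unfolding split_term_def log_partition_def partition_sum_before_split swap_noise_invariants[OF assms]
    by simp
qed

lemma measurable_split_term [measurable]: "split_term v \<in> borel_measurable noise_space"
  unfolding split_term_def visitor_share_def visitor_total_def visitor_weight_def outside_sum_def
    energy_def
  by measurable

lemma integrable_share_log_partition:
  assumes "v \<in> visitors"
  shows "integrable noise_space (\<lambda>\<omega>. visitor_share v \<omega> * log_partition D \<omega>)"
proof (rule Bochner_Integration.integrable_bound[OF integrable_log_partition])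
  show "(\<lambda>\<omega>. visitor_share v \<omega> * log_partition D \<omega>) \<in> borel_measurable noise_space"
    unfolding visitor_share_def visitor_total_def visitor_weight_def by measurable
  show "AE \<omega> in noise_space. norm (visitor_share v \<omega> * log_partition D \<omega>) \<le> norm (log_partition D \<omega>)"
  proof (intro AE_I2)
    fix \<omega>
    have "\<bar>visitor_share v \<omega>\<bar> \<le> 1"
      using visitor_share_bounds[OF assms] by simp
    then show "norm (visitor_share v \<omega> * log_partition D \<omega>) \<le> norm (log_partition D \<omega>)"
      by (simp add: abs_mult mult_left_le_one_le)
  qed
qed

lemma integral_split_term:
  assumes "v \<in> visitors"
  shows "integrable noise_space (split_term v)"
    and "integral\<^sup>L noise_space (split_term v) = (\<integral>\<omega>. visitor_share v \<omega> * log_partition D \<omega> \<partial>noise_space)"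
proof -
  have "slot v k0 \<in> slots" "shared_slot \<in> slots"
    using assms k0 s0 anchor_slot_in_slots[of "split_site"] unfolding visitors_def slots_def sites_def
    by auto
  then have "Transposition.transpose (slot v k0) shared_slot \<in> slots \<rightarrow> slots"
    by (auto simp: Transposition.transpose_def)
  note reindex = integral_PiM_reindex[OF prob_space_\<nu> inj_on_transpose this measurable_split_term[of v]]
  show "integrable noise_space (split_term v)"
    using reindex(1) integrable_share_log_partition[OF assms]
    by (simp add: split_term_swap_noise[OF assms, unfolded swap_noise_def])
  show "integral\<^sup>L noise_space (split_term v) = (\<integral>\<omega>. visitor_share v \<omega> * log_partition D \<omega> \<partial>noise_space)"
    using reindex(2) by (simp add: split_term_swap_noise[OF assms, unfolded swap_noise_def])
qed

lemma integral_log_partition_le_split: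
  "integral\<^sup>L noise_space (log_partition D) \<le> integral\<^sup>L noise_space (log_partition (insert split_site D))"
proof -
  have "integral\<^sup>L noise_space (log_partition D) =
      (\<integral>\<omega>. (\<Sum>v\<in>visitors. visitor_share v \<omega> * log_partition D \<omega>) \<partial>noise_space)"
    by (simp add: sum_distrib_right[symmetric] sum_visitor_share)
  also have "\<dots> = (\<Sum>v\<in>visitors. \<integral>\<omega>. visitor_share v \<omega> * log_partition D \<omega> \<partial>noise_space)"
    by (intro Bochner_Integration.integral_sum integrable_share_log_partition) blast
  also have "\<dots> = (\<Sum>v\<in>visitors. integral\<^sup>L noise_space (split_term v))"
    using integral_split_term by simp
  also have "\<dots> = (\<integral>\<omega>. (\<Sum>v\<in>visitors. split_term v \<omega>) \<partial>noise_space)"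
    using integral_split_term by (intro Bochner_Integration.integral_sum[symmetric]) blast
  also have "\<dots> \<le> integral\<^sup>L noise_space (log_partition (insert split_site D))"
    using integral_split_term
    by (intro integral_mono Bochner_Integration.integrable_sum integrable_log_partition sum_split_term_le) blast
  finally show ?thesis .
qed

end

context shared_noise
begin

lemma integral_log_partition_le_insert:
  assumes "s \<in> S" "k < t" "site s k \<notin> D"
  shows "integral\<^sup>L noise_space (log_partition D) \<le> integral\<^sup>L noise_space (log_partition (insert (site s k) D))"
proof -
  interpret site_split S t W site slot a \<nu> D s k
    by (intro site_split.intro shared_noise_axioms site_split_axioms.intro assms)
  show ?thesis
    by (rule integral_log_partition_le_split)
qed

lemma integral_log_partition_mono:
  assumes "D \<subseteq> sites"
  shows "integral\<^sup>L noise_space (log_partition {}) \<le> integral\<^sup>L noise_space (log_partition D)"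
  using finite_subset[OF assms finite_sites] assms
proof (induction D rule: finite_induct)
  case (insert c D)
  then obtain s k where "s \<in> S" "k < t" "c = site s k"
    unfolding sites_def by auto
  with insert show ?case
    using integral_log_partition_le_insert by fastforce
qed simp

theorem integral_ln_shared_le_independent:
  fixes \<xi> :: "'c \<Rightarrow> 'a \<Rightarrow> real" and \<zeta> :: "'i \<Rightarrow> 'b \<Rightarrow> real"
  assumes \<xi>: "(\<lambda>\<omega>. \<lambda>c\<in>sites. \<xi> c \<omega>) \<in> measurable M0 (PiM sites (\<lambda>_. \<nu>))"
      "distr M0 (PiM sites (\<lambda>_. \<nu>)) (\<lambda>\<omega>. \<lambda>c\<in>sites. \<xi> c \<omega>) = PiM sites (\<lambda>_. \<nu>)"
    and \<zeta>: "(\<lambda>\<omega>. \<lambda>i\<in>slots. \<zeta> i \<omega>) \<in> measurable M noise_space"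
      "distr M noise_space (\<lambda>\<omega>. \<lambda>i\<in>slots. \<zeta> i \<omega>) = noise_space"
  shows "(\<integral>\<omega>. ln (\<Sum>s\<in>S. W s * exp (\<Sum>k<t. a (site s k) * \<xi> (site s k) \<omega>)) \<partial>M0)
       \<le> (\<integral>\<omega>. ln (\<Sum>s\<in>S. W s * exp (\<Sum>k<t. a (site s k) * \<zeta> (slot s k) \<omega>)) \<partial>M)"
proof -
  define F where "F x = ln (\<Sum>s\<in>S. W s * exp (\<Sum>k<t. a (site s k) * x (site s k)))" for x :: "'c \<Rightarrow> real"
  have F: "F \<in> borel_measurable (PiM sites (\<lambda>_. \<nu>))"
    unfolding F_def by measurable
  have site: "site s k \<in> sites" and slot: "slot s k \<in> slots" if "s \<in> S" "k < t" for s k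
    using that unfolding sites_def slots_def by auto
  have "(\<integral>\<omega>. ln (\<Sum>s\<in>S. W s * exp (\<Sum>k<t. a (site s k) * \<xi> (site s k) \<omega>)) \<partial>M0)
      = (\<integral>\<omega>. F (\<lambda>c\<in>sites. \<xi> c \<omega>) \<partial>M0)"
    unfolding F_def using site by (intro Bochner_Integration.integral_cong refl arg_cong[where f=ln] sum.cong) auto
  also have "\<dots> = integral\<^sup>L (PiM sites (\<lambda>_. \<nu>)) F"
    using integral_distr[OF \<xi>(1) F] \<xi>(2) by simp
  also have "\<dots> = (\<integral>\<omega>. F (\<lambda>c\<in>sites. \<omega> (anchor_slot c)) \<partial>noise_space)"
    using anchor_slot_in_slots
    by (intro integral_PiM_reindex(2)[symmetric] prob_space_\<nu> inj_on_anchor_slot F) auto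
  also have "\<dots> = integral\<^sup>L noise_space (log_partition {})"
    unfolding F_def log_partition_def partition_sum_def energy_def noise_def using site
    by (intro Bochner_Integration.integral_cong refl arg_cong[where f=ln] sum.cong) auto
  also have "\<dots> \<le> integral\<^sup>L noise_space (log_partition sites)"
    by (rule integral_log_partition_mono) simp
  also have "\<dots> = (\<integral>\<omega>. log_partition sites (\<lambda>i\<in>slots. \<zeta> i \<omega>) \<partial>M)"
    using integral_distr[OF \<zeta>(1) measurable_log_partition] \<zeta>(2) by simp
  also have "\<dots> = (\<integral>\<omega>. ln (\<Sum>s\<in>S. W s * exp (\<Sum>k<t. a (site s k) * \<zeta> (slot s k) \<omega>)) \<partial>M)"
    unfolding log_partition_def partition_sum_def energy_def noise_def using site slot
    by (intro Bochner_Integration.integral_cong refl arg_cong[where f=ln] sum.cong) auto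
  finally show ?thesis .
qed

end

definition std_normal :: "real measure" where
  "std_normal = density lborel (\<lambda>x. ennreal (std_normal_density x))"

lemma prob_space_std_normal: "prob_space std_normal"
  unfolding std_normal_def by (rule prob_space_normal_density) simp

lemma sets_std_normal: "sets std_normal = sets borel"
  unfolding std_normal_def by simp

lemma integrable_std_normal: "integrable std_normal (\<lambda>x. x)"
proof -
  have "integrable lborel (\<lambda>x. std_normal_density x *\<^sub>R x)"
    using integrable_std_normal_moment[of 1] by simp
  then show ?thesis
    unfolding std_normal_def by (subst integrable_density) auto
qed

lemma distr_std_normal:
  assumes "distributed M lborel Y (\<lambda>x. ennreal (std_normal_density x))"
  shows "distr M borel Y = std_normal"
proof -
  have "distr M borel Y = distr M lborel Y"
    by (rule distr_cong) auto
  with assms show ?thesis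
    unfolding std_normal_def by (auto intro: distributed_distr_eq_density)
qed

lemma finite_Spaths: "finite (Spaths N P mu t)"
proof (rule finite_subset)
  show "Spaths N P mu t \<subseteq> {s. set s \<subseteq> {1..N} \<and> length s = t}"
    unfolding Spaths_def by auto
qed (rule finite_lists_length_eq, simp)

lemma phi_eq_ln_sum:
  assumes "\<And>s. s \<in> Spaths N P mu t \<Longrightarrow> x s = (\<Sum>k<t. beta (s ! k) * y s k)"
  shows "phi N P mu beta t x = - (1 / real t) * ln (\<Sum>s\<in>Spaths N P mu t.
      path_prob P mu s * exp (- beta_sq beta s / 2) * exp (\<Sum>k<t. beta (s ! k) * y s k))"
  unfolding phi_def using assms
  by (intro arg_cong[where f="\<lambda>u. - (1 / real t) * ln u"] sum.cong) (auto simp: mult.assoc exp_add[symmetric])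

lemma integral_ln_path_sum_shared_le_independent:
  fixes X :: "nat \<times> nat \<Rightarrow> 'a \<Rightarrow> real" and Z :: "nat list \<times> nat \<Rightarrow> 'b \<Rightarrow> real"
  assumes "t \<ge> 1"
    and "prob_space M0" "prob_space.indep_vars M0 (\<lambda>_. borel) X ({1..N} \<times> {1..})"
    and "\<forall>ik\<in>{1..N} \<times> {1..}. distributed M0 lborel (X ik) (\<lambda>x. ennreal (std_normal_density x))"
    and "prob_space M" "prob_space.indep_vars M (\<lambda>_. borel) Z (Spaths N P mu t \<times> {1..t})"
    and "\<forall>sk\<in>Spaths N P mu t \<times> {1..t}. distributed M lborel (Z sk) (\<lambda>x. ennreal (std_normal_density x))"
  shows "(\<integral>\<omega>. ln (\<Sum>s\<in>Spaths N P mu t. path_prob P mu s * exp (- beta_sq beta s / 2) *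
        exp (\<Sum>k<t. beta (s ! k) * X (s ! k, k + 1) \<omega>)) \<partial>M0)
      \<le> (\<integral>\<omega>. ln (\<Sum>s\<in>Spaths N P mu t. path_prob P mu s * exp (- beta_sq beta s / 2) *
        exp (\<Sum>k<t. beta (s ! k) * Z (s, k + 1) \<omega>)) \<partial>M)"
proof (cases "Spaths N P mu t = {}")
  case False
  interpret shared_noise "Spaths N P mu t" t "\<lambda>s. path_prob P mu s * exp (- beta_sq beta s / 2)"
      "\<lambda>s k. (s ! k, k + 1)" "\<lambda>s k. (s, k + 1)" "\<lambda>c. beta (fst c)" std_normal
  proof (rule shared_noise.intro)
    show "0 < path_prob P mu s * exp (- beta_sq beta s / 2)" if "s \<in> Spaths N P mu t" for s
      using that unfolding Spaths_def by simp
  qed (simp_all add: False finite_Spaths prob_space_std_normal sets_std_normal integrable_std_normal)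
  have sites: "sites \<subseteq> {1..N} \<times> {1..}"
    unfolding sites_def by (auto simp: Spaths_def dest: nth_mem)
  have "slots = Spaths N P mu t \<times> Suc ` {..<t}"
    unfolding slots_def by auto
  then have slots: "slots = Spaths N P mu t \<times> {1..t}"
    by (simp add: image_Suc_lessThan)
  obtain s where "s \<in> Spaths N P mu t"
    using False by auto
  then have "(s ! 0, 0 + 1) \<in> sites" "(s, 0 + 1) \<in> slots"
    using \<open>t \<ge> 1\<close> unfolding sites_def slots_def by (fastforce, fastforce)
  then have nonempty: "sites \<noteq> {}" "slots \<noteq> {}"
    by auto
  have X_std: "distr M0 borel (X i) = std_normal" if "i \<in> sites" for i
    using assms(4) sites that by (intro distr_std_normal) blast
  have Z_std: "distr M borel (Z i) = std_normal" if "i \<in> slots" for i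
    using assms(7) slots that by (intro distr_std_normal) blast
  note X_law = prob_space.distr_PiM_of_iid[OF assms(2)
      prob_space.indep_vars_subset[OF assms(2,3) sites] nonempty(1) sets_std_normal X_std]
  note Z_law = prob_space.distr_PiM_of_iid[OF assms(5) assms(6)[folded slots] nonempty(2)
      sets_std_normal Z_std]
  show ?thesis
    using integral_ln_shared_le_independent[OF X_law Z_law] by simp
qed simp

theorem lemma4:
  fixes N :: nat and P :: "nat \<Rightarrow> nat \<Rightarrow> real" and mu beta :: "nat \<Rightarrow> real"
    and M0 :: "'a measure" and X :: "nat \<times> nat \<Rightarrow> 'a \<Rightarrow> real"
    and M :: "'b measure" and Z :: "nat list \<times> nat \<Rightarrow> 'b \<Rightarrow> real"
    and t :: nat
  assumes "N \<ge> 1"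
    and "row_stochastic N P" and "irreducible_chain N P" and "aperiodic_chain N P"
    and "stationary_dist N P mu" and "\<forall>i\<in>{1..N}. mu i > 0"
    and "prob_space M0"
    and "prob_space.indep_vars M0 (\<lambda>_. borel) X ({1..N} \<times> {1..})"
    and "\<forall>ik\<in>{1..N} \<times> {1..}. distributed M0 lborel (X ik) (\<lambda>x. ennreal (std_normal_density x))"
    and "prob_space M"
    and "prob_space.indep_vars M (\<lambda>_. borel) Z (Spaths N P mu t \<times> {1..t})"
    and "\<forall>sk\<in>Spaths N P mu t \<times> {1..t}. distributed M lborel (Z sk) (\<lambda>x. ennreal (std_normal_density x))"
    and "t \<ge> 1"
  shows "(\<integral>\<omega>. phi N P mu beta t (Xbar beta (\<lambda>ik. X ik \<omega>)) \<partial>M0)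
       \<ge> (\<integral>\<omega>. phi N P mu beta t (Zbar beta (\<lambda>sk. Z sk \<omega>)) \<partial>M)"
proof -
  have "phi N P mu beta t (Xbar beta (\<lambda>ik. X ik \<omega>)) = - (1 / real t) *
      ln (\<Sum>s\<in>Spaths N P mu t. path_prob P mu s * exp (- beta_sq beta s / 2) *
        exp (\<Sum>k<t. beta (s ! k) * X (s ! k, k + 1) \<omega>))" for \<omega>
    by (rule phi_eq_ln_sum) (simp add: Xbar_def Spaths_def)
  moreover have "phi N P mu beta t (Zbar beta (\<lambda>sk. Z sk \<omega>)) = - (1 / real t) *
      ln (\<Sum>s\<in>Spaths N P mu t. path_prob P mu s * exp (- beta_sq beta s / 2) *
        exp (\<Sum>k<t. beta (s ! k) * Z (s, k + 1) \<omega>))" for \<omega>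
    by (rule phi_eq_ln_sum) (simp add: Zbar_def Spaths_def)
  ultimately show ?thesis
    using integral_ln_path_sum_shared_le_independent[OF assms(13,7-12), of beta]
    by (simp add: divide_right_mono)
qed

end
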